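(* Let $(K,v)$ be a valued field and let $\mathcal C=(\rho_i)_{i\in A}$ be a totally ordered family of inner nodes of $\mathcal T$ containing no maximal element, indexed by a totally ordered set $A$ so that $i\mapsto\rho_i$ is an order isomorphism. A nonzero $f\in K[x]$ is $\mathcal C$-stable if and only if $\operatorname{in}_{\rho_i}f$ is a unit in $\mathcal G_{\rho_i}$ for some $i\in A$.
   Context: $\Gamma$ is the value group of $v$, $\Gamma_{\mathbb Q}=\Gamma\otimes\mathbb Q$. $\mathcal T$ is the set of valuations $\mu$ on $K[x]$ with values in $\Gamma_{\mathbb Q}\cup\{\infty\}$, $\mu|_K=v$, $\mu^{-1}(\infty)=\{0\}$, partially ordered by $\mu\le\nu$ iff $\mu(f)\le\nu(f)$ for all $f\in K[x]$. For $\mu\in\mathcal T$ with value group $\Gamma_\mu$, the graded algebra is $\mathcal G_\mu=\bigoplus_{\alpha\in\Gamma_\mu}\mathcal P_\alpha/\mathcal P_\alpha^+$, where $\mathcal P_\alpha=\{g:\mu(g)\ge\alpha\}$, $\mathcal P^+_\alpha=\{g:\mu(g)>\alpha\}$, and $\operatorname{in}_\mu g=g+\mathcal P^+_{\mu(g)}$ for $g\ne0$. A polynomial $g$ is $\mu$-irreducible if $\operatorname{in}_\mu g$ generates a prime homogeneous principal ideal, and $\mu$-minimal if $\operatorname{in}_\mu g\nmid\operatorname{in}_\mu f$ for all nonzero $f$ with $\deg f<\deg g$; a key polynomial for $\mu$ is a monic $\mu$-minimal, $\mu$-irreducible polynomial. $\mu$ is an inner node if it has a key polynomial (equivalently, it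 is not maximal in $\mathcal T$). A polynomial $f$ is $\mathcal C$-stable if there is $i\in A$ with $\rho_i(f)=\rho_j(f)$ for all $j>i$. *)

theory Defs
  imports "HOL-Algebra.Ideal" "HOL-Algebra.Divisibility"
          "HOL-Computational_Algebra.Polynomial"
begin

(* Valuations are represented by functions into an ordered abelian group 'g;
   the value at 0 (which is \<infinity> on paper) is irrelevant and never used:
   every condition below only speaks about nonzero arguments. *)

definition valued_field :: "('a::field \<Rightarrow> 'g::linordered_ab_group_add) \<Rightarrow> bool" where
  "valued_field v \<longleftrightarrow>
     (\<forall>x y. x \<noteq> 0 \<longrightarrow> y \<noteq> 0 \<longrightarrow> v (x * y) = v x + v y) \<and>
     (\<forall>x y. x \<noteq> 0 \<longrightarrow> y \<noteq> 0 \<longrightarrow> x + y \<noteq> 0 \<longrightarrow> min (v x) (v y) \<le> v (x + y))"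

definition value_group :: "('a::field \<Rightarrow> 'g::linordered_ab_group_add) \<Rightarrow> 'g set" where
  "value_group v = {v x | x. x \<noteq> 0}"

definition nmul :: "nat \<Rightarrow> 'g::linordered_ab_group_add \<Rightarrow> 'g" where
  "nmul n \<gamma> = (((+) \<gamma>) ^^ n) 0"

(* Gamma_Q = Gamma \<otimes> Q, realised inside the ambient group 'g *)
definition rat_hull :: "'g::linordered_ab_group_add set \<Rightarrow> 'g set" where
  "rat_hull \<Gamma> = {\<gamma>. \<exists>n>0. nmul n \<gamma> \<in> \<Gamma>}"

(* 'g contains a copy of Gamma \<otimes> Q: every element of Gamma is n-divisible in 'g *)
definition contains_divisible_hull :: "'g::linordered_ab_group_add set \<Rightarrow> bool" where
  "contains_divisible_hull \<Gamma> \<longleftrightarrow> (\<forall>\<gamma>\<in>\<Gamma>. \<forall>n>0. \<exists>\<delta>. nmul n \<delta> = \<gamma>)"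

definition in_T :: "('a::field \<Rightarrow> 'g::linordered_ab_group_add) \<Rightarrow> ('a poly \<Rightarrow> 'g) \<Rightarrow> bool" where
  "in_T v \<mu> \<longleftrightarrow>
     (\<forall>f g. f \<noteq> 0 \<longrightarrow> g \<noteq> 0 \<longrightarrow> \<mu> (f * g) = \<mu> f + \<mu> g) \<and>
     (\<forall>f g. f \<noteq> 0 \<longrightarrow> g \<noteq> 0 \<longrightarrow> f + g \<noteq> 0 \<longrightarrow> min (\<mu> f) (\<mu> g) \<le> \<mu> (f + g)) \<and>
     (\<forall>c. c \<noteq> 0 \<longrightarrow> \<mu> [:c:] = v c) \<and>
     (\<forall>f. f \<noteq> 0 \<longrightarrow> \<mu> f \<in> rat_hull (value_group v))"

definition val_le :: "('a::field poly \<Rightarrow> 'g::linordered_ab_group_add) \<Rightarrow> ('a poly \<Rightarrow> 'g) \<Rightarrow> bool" where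
  "val_le \<mu> \<nu> \<longleftrightarrow> (\<forall>f. f \<noteq> 0 \<longrightarrow> \<mu> f \<le> \<nu> f)"

definition val_less :: "('a::field poly \<Rightarrow> 'g::linordered_ab_group_add) \<Rightarrow> ('a poly \<Rightarrow> 'g) \<Rightarrow> bool" where
  "val_less \<mu> \<nu> \<longleftrightarrow> val_le \<mu> \<nu> \<and> \<not> val_le \<nu> \<mu>"

definition Pge :: "('a::field poly \<Rightarrow> 'g::linordered_ab_group_add) \<Rightarrow> 'g \<Rightarrow> 'a poly set" where
  "Pge \<mu> \<alpha> = {g. g = 0 \<or> \<alpha> \<le> \<mu> g}"

definition Pgt :: "('a::field poly \<Rightarrow> 'g::linordered_ab_group_add) \<Rightarrow> 'g \<Rightarrow> 'a poly set" where
  "Pgt \<mu> \<alpha> = {g. g = 0 \<or> \<alpha> < \<mu> g}"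

definition gcos :: "('a::field poly \<Rightarrow> 'g::linordered_ab_group_add) \<Rightarrow> 'g \<Rightarrow> 'a poly \<Rightarrow> 'a poly set" where
  "gcos \<mu> \<alpha> g = (\<lambda>h. g + h) ` Pgt \<mu> \<alpha>"

definition hcomp :: "('a::field poly \<Rightarrow> 'g::linordered_ab_group_add) \<Rightarrow> 'g \<Rightarrow> 'a poly set set" where
  "hcomp \<mu> \<alpha> = gcos \<mu> \<alpha> ` Pge \<mu> \<alpha>"

definition gsupp :: "('a::field poly \<Rightarrow> 'g::linordered_ab_group_add) \<Rightarrow> ('g \<Rightarrow> 'a poly set) \<Rightarrow> 'g set" where
  "gsupp \<mu> c = {\<alpha>. c \<alpha> \<noteq> Pgt \<mu> \<alpha>}"

definition grep :: "'a set \<Rightarrow> 'a" where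
  "grep X = (SOME x. x \<in> X)"

definition ini :: "('a::field poly \<Rightarrow> 'g::linordered_ab_group_add) \<Rightarrow> 'a poly \<Rightarrow> ('g \<Rightarrow> 'a poly set)" where
  "ini \<mu> g = (\<lambda>\<alpha>. if g \<noteq> 0 \<and> \<alpha> = \<mu> g then gcos \<mu> \<alpha> g else Pgt \<mu> \<alpha>)"

(* G_mu = direct sum of the P_alpha/P_alpha^+, as a HOL-Algebra ring.
   Components at degrees outside the value group are automatically trivial. *)
definition Gr :: "('a::field poly \<Rightarrow> 'g::linordered_ab_group_add) \<Rightarrow> ('g \<Rightarrow> 'a poly set) ring" where
  "Gr \<mu> = \<lparr>carrier = {c. (\<forall>\<alpha>. c \<alpha> \<in> hcomp \<mu> \<alpha>) \<and> finite (gsupp \<mu> c)},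
           monoid.mult = (\<lambda>c d. \<lambda>\<gamma>. gcos \<mu> \<gamma> (\<Sum>\<alpha>\<in>gsupp \<mu> c. grep (c \<alpha>) * grep (d (\<gamma> - \<alpha>)))),
           monoid.one = ini \<mu> 1,
           ring.zero = (\<lambda>\<alpha>. Pgt \<mu> \<alpha>),
           ring.add = (\<lambda>c d. \<lambda>\<alpha>. {x + y | x y. x \<in> c \<alpha> \<and> y \<in> d \<alpha>})\<rparr>"

definition mu_irreducible :: "('a::field poly \<Rightarrow> 'g::linordered_ab_group_add) \<Rightarrow> 'a poly \<Rightarrow> bool" where
  "mu_irreducible \<mu> g \<longleftrightarrow> primeideal (PIdl\<^bsub>Gr \<mu>\<^esub> (ini \<mu> g)) (Gr \<mu>)"

definition mu_minimal :: "('a::field poly \<Rightarrow> 'g::linordered_ab_group_add) \<Rightarrow> 'a poly \<Rightarrow> bool" where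
  "mu_minimal \<mu> g \<longleftrightarrow>
     (\<forall>f. f \<noteq> 0 \<longrightarrow> degree f < degree g \<longrightarrow> \<not> (ini \<mu> g divides\<^bsub>Gr \<mu>\<^esub> ini \<mu> f))"

definition key_polynomial :: "('a::field poly \<Rightarrow> 'g::linordered_ab_group_add) \<Rightarrow> 'a poly \<Rightarrow> bool" where
  "key_polynomial \<mu> \<phi> \<longleftrightarrow> lead_coeff \<phi> = 1 \<and> mu_minimal \<mu> \<phi> \<and> mu_irreducible \<mu> \<phi>"

definition inner_node :: "('a::field poly \<Rightarrow> 'g::linordered_ab_group_add) \<Rightarrow> bool" where
  "inner_node \<mu> \<longleftrightarrow> (\<exists>\<phi>. key_polynomial \<mu> \<phi>)"

definition C_stable :: "'i::linorder set \<Rightarrow> ('i \<Rightarrow> 'a::field poly \<Rightarrow> 'g::linordered_ab_group_add) \<Rightarrow> 'a poly \<Rightarrow> bool" where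
  "C_stable A \<rho> f \<longleftrightarrow> (\<exists>i\<in>A. \<forall>j\<in>A. i < j \<longrightarrow> \<rho> j f = \<rho> i f)"

end

theory Submission
  imports Defs
begin

text \<open>
  If \<open>in\<^sub>\<rho>\<^sub>i f\<close> is a unit, there is \<open>a\<close> with \<open>\<rho>\<^sub>i (a f - 1) > 0\<close>; then
  \<open>\<rho>\<^sub>j (a f) = 0 = \<rho>\<^sub>i (a f)\<close> for every \<open>\<rho>\<^sub>j \<ge> \<rho>\<^sub>i\<close>, and since \<open>\<rho>\<^sub>i \<le> \<rho>\<^sub>j\<close> on both \<open>a\<close>
  and \<open>f\<close>, we get \<open>\<rho>\<^sub>j f = \<rho>\<^sub>i f\<close>.
  Conversely, let \<open>\<mu> < \<nu>\<close> with \<open>\<mu> f = \<nu> f\<close>, and let \<open>\<phi>\<close> have minimal degree with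
  \<open>\<mu> \<phi> < \<nu> \<phi>\<close>, so that \<open>\<mu>\<close> and \<open>\<nu>\<close> agree below degree \<open>deg \<phi>\<close>. Writing \<open>f = q \<phi> + r\<close>,
  the remainder \<open>r\<close> is nonzero and strictly dominates \<open>q \<phi>\<close> for \<open>\<nu>\<close>. By minimality \<open>\<phi>\<close> has
  no nonconstant proper factor, so \<open>r s + t \<phi> = 1\<close> with \<open>deg s < deg \<phi>\<close>; comparing \<open>\<mu>\<close> and
  \<open>\<nu>\<close> on this identity forces \<open>\<nu> (t \<phi>) > 0\<close>, hence \<open>\<nu> (f s - 1) > 0\<close> and \<open>in\<^sub>\<nu> f\<close> is a
  unit.
\<close>

locale poly_valuation =
  fixes \<mu> :: "'a::field poly \<Rightarrow> 'g::linordered_ab_group_add"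
  assumes val_mult: "f \<noteq> 0 \<Longrightarrow> g \<noteq> 0 \<Longrightarrow> \<mu> (f * g) = \<mu> f + \<mu> g"
    and val_add_ge_min: "f \<noteq> 0 \<Longrightarrow> g \<noteq> 0 \<Longrightarrow> f + g \<noteq> 0 \<Longrightarrow> min (\<mu> f) (\<mu> g) \<le> \<mu> (f + g)"

definition mu_unit :: "('a::field poly \<Rightarrow> 'g::linordered_ab_group_add) \<Rightarrow> 'a poly \<Rightarrow> bool" where
  "mu_unit \<mu> f \<longleftrightarrow> (\<exists>a. a * f - 1 \<in> Pgt \<mu> 0)"

lemma poly_valuation_if_in_T: "in_T v \<mu> \<Longrightarrow> poly_valuation \<mu>"
  unfolding in_T_def by unfold_locales blast+

context poly_valuation
begin

lemma val_1 [simp]: "\<mu> 1 = 0"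
  using val_mult[of 1 1] by simp

lemma val_minus_1 [simp]: "\<mu> (- 1) = 0"
proof -
  have "\<mu> (- 1) + \<mu> (- 1) = 0"
    using val_mult[of "- 1" "- 1"] by simp
  then show ?thesis
    by (metis add_neg_neg add_pos_pos less_irrefl linorder_neqE)
qed

lemma val_uminus [simp]: "\<mu> (- f) = \<mu> f"
  using val_mult[of "- 1" f] by (cases "f = 0") simp_all

lemma Pge_add: "x \<in> Pge \<mu> \<alpha> \<Longrightarrow> y \<in> Pge \<mu> \<alpha> \<Longrightarrow> x + y \<in> Pge \<mu> \<alpha>"
  using val_add_ge_min[of x y] by (fastforce simp: Pge_def min_def split: if_splits)

lemma Pgt_add: "x \<in> Pgt \<mu> \<alpha> \<Longrightarrow> y \<in> Pgt \<mu> \<alpha> \<Longrightarrow> x + y \<in> Pgt \<mu> \<alpha>"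
  using val_add_ge_min[of x y] by (fastforce simp: Pgt_def min_def split: if_splits)

lemma Pgt_uminus: "x \<in> Pgt \<mu> \<alpha> \<Longrightarrow> - x \<in> Pgt \<mu> \<alpha>"
  by (simp add: Pgt_def)

lemma Pgt_diff: "x \<in> Pgt \<mu> \<alpha> \<Longrightarrow> y \<in> Pgt \<mu> \<alpha> \<Longrightarrow> x - y \<in> Pgt \<mu> \<alpha>"
  using Pgt_add[OF _ Pgt_uminus, of x \<alpha> y] by simp

lemma Pgt_sum: "(\<And>a. a \<in> S \<Longrightarrow> T a \<in> Pgt \<mu> \<gamma>) \<Longrightarrow> sum T S \<in> Pgt \<mu> \<gamma>"
proof (induction S rule: infinite_finite_induct)
  case (insert a S)
  then show ?case
    using Pgt_add by simp
qed (simp_all add: Pgt_def)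

lemma Pgt_imp_Pge: "x \<in> Pgt \<mu> \<alpha> \<Longrightarrow> x \<in> Pge \<mu> \<alpha>"
  by (auto simp: Pgt_def Pge_def)

lemma mult_Pge_Pgt: "x \<in> Pge \<mu> \<alpha> \<Longrightarrow> y \<in> Pgt \<mu> \<beta> \<Longrightarrow> x * y \<in> Pgt \<mu> (\<alpha> + \<beta>)"
  using val_mult[of x y] add_le_less_mono[of \<alpha> "\<mu> x" \<beta> "\<mu> y"]
  by (cases "x = 0 \<or> y = 0") (auto simp: Pgt_def Pge_def)

lemma mult_Pgt_Pge: "x \<in> Pgt \<mu> \<alpha> \<Longrightarrow> y \<in> Pge \<mu> \<beta> \<Longrightarrow> x * y \<in> Pgt \<mu> (\<alpha> + \<beta>)"
  using mult_Pge_Pgt[of y \<beta> x \<alpha>] by (simp add: mult.commute add.commute)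

lemma val_add_eq_min:
  assumes "f \<noteq> 0" "g \<noteq> 0" "\<mu> f \<noteq> \<mu> g"
  shows "f + g \<noteq> 0" and "\<mu> (f + g) = min (\<mu> f) (\<mu> g)"
proof -
  show "f + g \<noteq> 0"
    using assms by (metis add_eq_0_iff val_uminus)
  moreover have "min (\<mu> (f + g)) (\<mu> g) \<le> \<mu> f"
    using val_add_ge_min[of "f + g" "- g"] assms calculation by simp
  moreover have "min (\<mu> (f + g)) (\<mu> f) \<le> \<mu> g"
    using val_add_ge_min[of "f + g" "- f"] assms calculation by simp
  ultimately show "\<mu> (f + g) = min (\<mu> f) (\<mu> g)"
    using val_add_ge_min[of f g] assms by (auto simp: min_def split: if_splits)
qed

lemma val_eq_0_if_close_to_1:
  assumes "h - 1 \<in> Pgt \<mu> 0"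
  shows "h \<noteq> 0" and "\<mu> h = 0"
proof -
  have "h \<notin> Pgt \<mu> 0"
    using Pgt_diff[of h 0 "h - 1"] assms by (auto simp: Pgt_def)
  moreover have "h \<in> Pge \<mu> 0"
    using Pge_add[of 1 0 "h - 1"] Pgt_imp_Pge[OF assms] by (simp add: Pge_def)
  ultimately show "h \<noteq> 0" and "\<mu> h = 0"
    by (auto simp: Pgt_def Pge_def)
qed

lemma gcos_mem_iff: "z \<in> gcos \<mu> \<alpha> a \<longleftrightarrow> z - a \<in> Pgt \<mu> \<alpha>"
  unfolding gcos_def by (auto simp: image_iff) (metis add_diff_cancel_left' diff_add_cancel add.commute)

lemma gcos_eq_iff: "gcos \<mu> \<alpha> a = gcos \<mu> \<alpha> b \<longleftrightarrow> a - b \<in> Pgt \<mu> \<alpha>"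
proof
  assume "gcos \<mu> \<alpha> a = gcos \<mu> \<alpha> b"
  then show "a - b \<in> Pgt \<mu> \<alpha>"
    using gcos_mem_iff[of a \<alpha> a] gcos_mem_iff[of a \<alpha> b] by (simp add: Pgt_def)
next
  assume ab: "a - b \<in> Pgt \<mu> \<alpha>"
  have "z - a \<in> Pgt \<mu> \<alpha> \<longleftrightarrow> z - b \<in> Pgt \<mu> \<alpha>" for z
    using Pgt_add[OF _ ab, of "z - a"] Pgt_diff[OF _ ab, of "z - b"] by auto
  then show "gcos \<mu> \<alpha> a = gcos \<mu> \<alpha> b"
    by (auto simp: gcos_mem_iff)
qed

lemma gcos_0: "gcos \<mu> \<alpha> 0 = Pgt \<mu> \<alpha>"
  by (simp add: gcos_def)

lemma grep_gcos: "grep (gcos \<mu> \<alpha> a) - a \<in> Pgt \<mu> \<alpha>"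
proof -
  have "a \<in> gcos \<mu> \<alpha> a"
    by (simp add: gcos_mem_iff Pgt_def)
  then have "grep (gcos \<mu> \<alpha> a) \<in> gcos \<mu> \<alpha> a"
    unfolding grep_def by (rule someI)
  then show ?thesis
    by (simp add: gcos_mem_iff)
qed

lemma grep_Pgt: "grep (Pgt \<mu> \<alpha>) \<in> Pgt \<mu> \<alpha>"
  using grep_gcos[of \<alpha> 0] by (simp add: gcos_0)

lemma grep_carrier:
  assumes "x \<in> carrier (Gr \<mu>)"
  shows "grep (x \<alpha>) \<in> Pge \<mu> \<alpha>"
proof -
  obtain b where "b \<in> Pge \<mu> \<alpha>" "x \<alpha> = gcos \<mu> \<alpha> b"
    using assms by (auto simp: Gr_def hcomp_def)
  then show ?thesis
    using Pge_add[OF Pgt_imp_Pge[OF grep_gcos[of \<alpha> b]], of b] by simp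
qed

lemma grep_ini_self: "f \<noteq> 0 \<Longrightarrow> grep (ini \<mu> f (\<mu> f)) - f \<in> Pgt \<mu> (\<mu> f)"
  using grep_gcos by (simp add: ini_def)

lemma grep_ini_other: "\<alpha> \<noteq> \<mu> f \<Longrightarrow> grep (ini \<mu> f \<alpha>) \<in> Pgt \<mu> \<alpha>"
  using grep_Pgt by (simp add: ini_def)

lemma ini_in_carrier:
  assumes "f \<noteq> 0"
  shows "ini \<mu> f \<in> carrier (Gr \<mu>)"
proof -
  have "gcos \<mu> (\<mu> f) f \<noteq> Pgt \<mu> (\<mu> f)"
    using gcos_eq_iff[of "\<mu> f" f 0] assms by (simp add: gcos_0 Pgt_def)
  then have "gsupp \<mu> (ini \<mu> f) = {\<mu> f}"
    using assms by (auto simp: gsupp_def ini_def)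
  moreover have "ini \<mu> f \<alpha> \<in> hcomp \<mu> \<alpha>" for \<alpha>
    using assms unfolding ini_def hcomp_def
    by (auto simp: Pge_def gcos_0[symmetric] intro!: image_eqI)
  ultimately show ?thesis
    by (simp add: Gr_def)
qed

lemma Gr_one: "\<one>\<^bsub>Gr \<mu>\<^esub> = ini \<mu> 1"
  by (simp add: Gr_def)

lemma mult_ini_right:
  assumes x: "x \<in> carrier (Gr \<mu>)" and "f \<noteq> 0"
  shows "(x \<otimes>\<^bsub>Gr \<mu>\<^esub> ini \<mu> f) \<gamma> = gcos \<mu> \<gamma> (grep (x (\<gamma> - \<mu> f)) * f)"
proof -
  define \<alpha>\<^sub>0 where "\<alpha>\<^sub>0 = \<gamma> - \<mu> f"
  define T where "T \<alpha> = grep (x \<alpha>) * grep (ini \<mu> f (\<gamma> - \<alpha>))" for \<alpha>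
  have other: "T \<alpha> \<in> Pgt \<mu> \<gamma>" if "\<alpha> \<noteq> \<alpha>\<^sub>0" for \<alpha>
    using mult_Pge_Pgt[OF grep_carrier[OF x, of \<alpha>] grep_ini_other[of "\<gamma> - \<alpha>" f]] that
    by (simp add: T_def \<alpha>\<^sub>0_def algebra_simps)
  have "sum T (gsupp \<mu> x) - T \<alpha>\<^sub>0 \<in> Pgt \<mu> \<gamma>"
  proof (cases "\<alpha>\<^sub>0 \<in> gsupp \<mu> x")
    case True
    moreover have "finite (gsupp \<mu> x)"
      using x by (simp add: Gr_def)
    ultimately show ?thesis
      using Pgt_sum[of "gsupp \<mu> x - {\<alpha>\<^sub>0}" T] other by (simp add: sum.remove)
  next
    case False
    then have "grep (x \<alpha>\<^sub>0) \<in> Pgt \<mu> \<alpha>\<^sub>0"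
      using grep_Pgt by (simp add: gsupp_def)
    then have "T \<alpha>\<^sub>0 \<in> Pgt \<mu> \<gamma>"
      using mult_Pgt_Pge[of _ \<alpha>\<^sub>0 "grep (ini \<mu> f (\<mu> f))" "\<mu> f"]
        Pge_add[OF Pgt_imp_Pge[OF grep_ini_self[OF \<open>f \<noteq> 0\<close>]], of f] 
      by (simp add: T_def \<alpha>\<^sub>0_def Pge_def)
    moreover have "sum T (gsupp \<mu> x) \<in> Pgt \<mu> \<gamma>"
      using False by (intro Pgt_sum other) auto
    ultimately show ?thesis
      by (intro Pgt_diff)
  qed
  moreover have "T \<alpha>\<^sub>0 - grep (x \<alpha>\<^sub>0) * f \<in> Pgt \<mu> \<gamma>"
    using mult_Pge_Pgt[OF grep_carrier[OF x] grep_ini_self[OF \<open>f \<noteq> 0\<close>], of \<alpha>\<^sub>0]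
    by (simp add: T_def \<alpha>\<^sub>0_def right_diff_distrib)
  ultimately have "sum T (gsupp \<mu> x) - grep (x \<alpha>\<^sub>0) * f \<in> Pgt \<mu> \<gamma>"
    using Pgt_add by fastforce
  then show ?thesis
    by (simp add: Gr_def T_def \<alpha>\<^sub>0_def gcos_eq_iff)
qed

lemma mult_ini:
  assumes "f \<noteq> 0" "g \<noteq> 0"
  shows "ini \<mu> g \<otimes>\<^bsub>Gr \<mu>\<^esub> ini \<mu> f = ini \<mu> (g * f)"
proof
  fix \<gamma>
  have gf: "g * f \<noteq> 0" "\<mu> (g * f) = \<mu> g + \<mu> f"
    using assms val_mult by auto
  have "gcos \<mu> \<gamma> (grep (ini \<mu> g (\<gamma> - \<mu> f)) * f) = ini \<mu> (g * f) \<gamma>"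
  proof (cases "\<gamma> = \<mu> (g * f)")
    case True
    then have "(grep (ini \<mu> g (\<gamma> - \<mu> f)) - g) * f \<in> Pgt \<mu> \<gamma>"
      using mult_Pgt_Pge[OF grep_ini_self[OF \<open>g \<noteq> 0\<close>], of f "\<mu> f"] gf
      by (simp add: Pge_def)
    then show ?thesis
      using True gf by (simp add: ini_def gcos_eq_iff left_diff_distrib)
  next
    case False
    then have "grep (ini \<mu> g (\<gamma> - \<mu> f)) * f \<in> Pgt \<mu> \<gamma>"
      using mult_Pgt_Pge[OF grep_ini_other, of "\<gamma> - \<mu> f" g f "\<mu> f"] gf
      by (simp add: Pge_def algebra_simps)
    then show ?thesis
      using False gcos_eq_iff[of \<gamma> _ 0] by (simp add: ini_def gcos_0)
  qed
  then show "(ini \<mu> g \<otimes>\<^bsub>Gr \<mu>\<^esub> ini \<mu> f) \<gamma> = ini \<mu> (g * f) \<gamma>"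
    using mult_ini_right[OF ini_in_carrier[OF \<open>g \<noteq> 0\<close>] \<open>f \<noteq> 0\<close>] by simp
qed

lemma ini_Units_iff_mu_unit:
  assumes "f \<noteq> 0"
  shows "ini \<mu> f \<in> Units (Gr \<mu>) \<longleftrightarrow> mu_unit \<mu> f"
proof
  assume "ini \<mu> f \<in> Units (Gr \<mu>)"
  then obtain x where x: "x \<in> carrier (Gr \<mu>)" "x \<otimes>\<^bsub>Gr \<mu>\<^esub> ini \<mu> f = \<one>\<^bsub>Gr \<mu>\<^esub>"
    by (auto simp: Units_def)
  then have "gcos \<mu> 0 (grep (x (- \<mu> f)) * f) = gcos \<mu> 0 1"
    using mult_ini_right[OF x(1) assms, of 0] by (simp add: Gr_one ini_def)
  then show "mu_unit \<mu> f"
    by (auto simp: mu_unit_def gcos_eq_iff)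
next
  assume "mu_unit \<mu> f"
  then obtain a where a: "a * f - 1 \<in> Pgt \<mu> 0"
    by (auto simp: mu_unit_def)
  then have "a \<noteq> 0"
    using val_eq_0_if_close_to_1(1) by fastforce
  moreover have "gcos \<mu> 0 (a * f) = gcos \<mu> 0 1"
    using a by (simp add: gcos_eq_iff)
  ultimately have "ini \<mu> (a * f) = \<one>\<^bsub>Gr \<mu>\<^esub>"
    using val_eq_0_if_close_to_1[OF a] by (auto simp: Gr_one ini_def fun_eq_iff)
  then show "ini \<mu> f \<in> Units (Gr \<mu>)"
    using mult_ini[OF assms \<open>a \<noteq> 0\<close>] mult_ini[OF \<open>a \<noteq> 0\<close> assms]
      ini_in_carrier[OF assms] ini_in_carrier[OF \<open>a \<noteq> 0\<close>]
    unfolding Units_def by (auto simp: mult.commute)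
qed

end

lemma poly_bezout_if_common_divisors_constant:
  fixes p q :: "'a::field poly"
  assumes "p \<noteq> 0" and common_divisor: "\<And>d. d dvd p \<Longrightarrow> d dvd q \<Longrightarrow> degree d = 0"
  shows "\<exists>s t. s * p + t * q = 1"
proof -
  define I where "I = {s * p + t * q | s t. True} - {0}"
  have "p = 1 * p + 0 * q"
    by simp
  then have "p \<in> I"
    using assms(1) unfolding I_def by blast
  then obtain d where "d \<in> I" and d_min: "\<And>g. g \<in> I \<Longrightarrow> degree d \<le> degree g"
    using ex_has_least_nat[of "\<lambda>g. g \<in> I" p degree] by blast
  then obtain s t where d: "d = s * p + t * q" "d \<noteq> 0"
    unfolding I_def by blast
  have d_dvd: "d dvd s' * p + t' * q" for s' t'
  proof (rule ccontr)
    define g where "g = s' * p + t' * q"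
    assume "\<not> d dvd s' * p + t' * q"
    then have "g mod d \<noteq> 0"
      by (simp add: g_def mod_eq_0_iff_dvd)
    moreover have "g mod d = (s' - g div d * s) * p + (t' - g div d * t) * q"
      by (simp add: g_def d(1) minus_div_mult_eq_mod[symmetric] algebra_simps)
    ultimately have "g mod d \<in> I"
      unfolding I_def by blast
    then show False
      using d_min degree_mod_less'[OF d(2) \<open>g mod d \<noteq> 0\<close>] by fastforce
  qed
  have "d dvd p" "d dvd q"
    using d_dvd[of 1 0] d_dvd[of 0 1] by simp_all
  then obtain c where c: "d = [:c:]"
    using common_divisor degree0_coeffs by blast
  have "smult (inverse c) s * p + smult (inverse c) t * q = smult (inverse c) (s * p + t * q)"
    by (simp add: smult_add_right)
  also have "\<dots> = smult (inverse c) [:c:]"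
    using c d(1) by simp
  also have "\<dots> = 1"
    using c d(2) by (simp add: one_pCons)
  finally show ?thesis
    by blast
qed

locale poly_valuation_pair = \<mu>: poly_valuation \<mu> + \<nu>: poly_valuation \<nu>
  for \<mu> \<nu> :: "'a::field poly \<Rightarrow> 'g::linordered_ab_group_add" +
  assumes val_le: "val_le \<mu> \<nu>"

lemma poly_valuation_pair_if_in_T:
  "in_T v \<mu> \<Longrightarrow> in_T v \<nu> \<Longrightarrow> val_le \<mu> \<nu> \<Longrightarrow> poly_valuation_pair \<mu> \<nu>"
  by (simp add: poly_valuation_pair_def poly_valuation_pair_axioms_def poly_valuation_if_in_T)

context poly_valuation_pair
begin

lemma val_le_val: "h \<noteq> 0 \<Longrightarrow> \<mu> h \<le> \<nu> h"
  using val_le by (simp add: val_le_def)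

lemma Pgt_mono: "x \<in> Pgt \<mu> \<alpha> \<Longrightarrow> x \<in> Pgt \<nu> \<alpha>"
  using val_le_val[of x] by (cases "x = 0") (auto simp: Pgt_def)

lemma val_eq_if_mu_unit:
  assumes "f \<noteq> 0" "mu_unit \<mu> f"
  shows "\<nu> f = \<mu> f"
proof -
  obtain a where a: "a * f - 1 \<in> Pgt \<mu> 0"
    using assms(2) by (auto simp: mu_unit_def)
  then have "a \<noteq> 0" "\<mu> (a * f) = 0" "\<nu> (a * f) = 0"
    using \<mu>.val_eq_0_if_close_to_1[OF a] \<nu>.val_eq_0_if_close_to_1[OF Pgt_mono[OF a]] by auto
  then have "\<mu> a + \<mu> f = \<nu> a + \<nu> f"
    using \<mu>.val_mult \<nu>.val_mult assms(1) by metis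
  moreover have "\<mu> a \<le> \<nu> a" "\<mu> f \<le> \<nu> f"
    using val_le_val \<open>a \<noteq> 0\<close> assms(1) by auto
  ultimately show ?thesis
    by (metis add_le_less_mono order.not_eq_order_implies_strict less_irrefl)
qed

lemma val_pos_if_add_eq_1:
  assumes "x + y = 1" "x \<noteq> 0" "y \<noteq> 0" "\<mu> x = \<nu> x" "\<mu> y < \<nu> y"
  shows "0 < \<nu> y"
proof (rule ccontr)
  assume "\<not> 0 < \<nu> y"
  then have "\<mu> y < 0"
    using assms(5) by simp
  have "\<mu> x = \<mu> y"
  proof (rule ccontr)
    assume "\<mu> x \<noteq> \<mu> y"
    then have "\<mu> (x + y) = min (\<mu> x) (\<mu> y)"
      using \<mu>.val_add_eq_min assms(2,3) by blast
    then show False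
      using assms(1) \<open>\<mu> y < 0\<close> min.cobounded2[of "\<mu> x" "\<mu> y"] by simp
  qed
  then have "\<nu> x < \<nu> y"
    using assms(4,5) by simp
  then have "\<nu> (x + y) = \<nu> x"
    using \<nu>.val_add_eq_min(2)[of x y] assms(2,3) by (simp add: min_absorb1)
  then show False
    using assms(1,4) \<open>\<mu> x = \<mu> y\<close> \<open>\<mu> y < 0\<close> by simp
qed

end

text \<open>In the paper's setting \<open>\<phi>\<close> is a key polynomial for \<open>\<mu>\<close>; only its minimality is used here.\<close>

locale min_separating_poly = poly_valuation_pair +
  fixes \<phi>
  assumes sep_nonzero: "\<phi> \<noteq> 0"
    and val_sep_less: "\<mu> \<phi> < \<nu> \<phi>"
    and degree_sep_pos: "0 < degree \<phi>"
    and val_eq_if_degree_less: "h \<noteq> 0 \<Longrightarrow> degree h < degree \<phi> \<Longrightarrow> \<mu> h = \<nu> h"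

lemma (in poly_valuation_pair) ex_min_separating_poly:
  assumes "\<exists>h. h \<noteq> 0 \<and> \<mu> h < \<nu> h" and "\<And>c. c \<noteq> 0 \<Longrightarrow> \<mu> [:c:] = \<nu> [:c:]"
  shows "\<exists>\<phi>. min_separating_poly \<mu> \<nu> \<phi>"
proof -
  obtain \<phi> where \<phi>: "\<phi> \<noteq> 0" "\<mu> \<phi> < \<nu> \<phi>"
    and least: "\<And>h. h \<noteq> 0 \<and> \<mu> h < \<nu> h \<Longrightarrow> degree \<phi> \<le> degree h"
    using ex_has_least_nat[of "\<lambda>h. h \<noteq> 0 \<and> \<mu> h < \<nu> h" _ degree] assms(1) by metis
  have "0 < degree \<phi>"
  proof (rule ccontr)
    assume "\<not> 0 < degree \<phi>"
    then obtain c where "\<phi> = [:c:]"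
      using degree0_coeffs by blast
    then show False
      using \<phi> assms(2)[of c] by auto
  qed
  moreover have "\<mu> h = \<nu> h" if "h \<noteq> 0" "degree h < degree \<phi>" for h
    using least[of h] that val_le_val[OF that(1)] by force
  ultimately show ?thesis
    using \<phi> poly_valuation_pair_axioms
    by (auto simp: min_separating_poly_def min_separating_poly_axioms_def)
qed

context min_separating_poly
begin

lemma val_mult_sep_less: "h \<noteq> 0 \<Longrightarrow> \<mu> (h * \<phi>) < \<nu> (h * \<phi>)"
  using \<mu>.val_mult \<nu>.val_mult sep_nonzero val_sep_less val_le_val[of h]
  by (simp add: add_le_less_mono)

lemma degree_0_if_dvd_sep:
  assumes "d dvd \<phi>" "degree d < degree \<phi>"
  shows "degree d = 0"
proof (rule ccontr)
  assume "degree d \<noteq> 0"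
  obtain e where e: "\<phi> = d * e"
    using assms(1) by blast
  then have "d \<noteq> 0" "e \<noteq> 0"
    using sep_nonzero by auto
  then have "degree e < degree \<phi>"
    using e \<open>degree d \<noteq> 0\<close> by (simp add: degree_mult_eq)
  then have "\<mu> \<phi> = \<nu> \<phi>"
    using e \<open>d \<noteq> 0\<close> \<open>e \<noteq> 0\<close> assms(2) \<mu>.val_mult \<nu>.val_mult val_eq_if_degree_less by metis
  then show False
    using val_sep_less by simp
qed

lemma ex_inverse_mod_sep:
  assumes "r \<noteq> 0" "degree r < degree \<phi>"
  obtains s t where "r * s + t * \<phi> = 1" "s \<noteq> 0" "degree s < degree \<phi>"
proof -
  have "degree d = 0" if "d dvd r" "d dvd \<phi>" for d
    using degree_0_if_dvd_sep dvd_imp_degree_le[of d r] that assms by fastforce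
  then obtain s\<^sub>0 t\<^sub>0 where st\<^sub>0: "s\<^sub>0 * r + t\<^sub>0 * \<phi> = 1"
    using poly_bezout_if_common_divisors_constant[OF assms(1), of \<phi>] by blast
  define s where "s = s\<^sub>0 mod \<phi>"
  define t where "t = t\<^sub>0 + s\<^sub>0 div \<phi> * r"
  have "r * s + t * \<phi> = r * (s\<^sub>0 div \<phi> * \<phi> + s) + t\<^sub>0 * \<phi>"
    by (simp add: t_def algebra_simps)
  also have "\<dots> = 1"
    using st\<^sub>0 by (simp add: s_def algebra_simps)
  finally have st: "r * s + t * \<phi> = 1" .
  have "s \<noteq> 0"
  proof
    assume "s = 0"
    then have "t * \<phi> = 1"
      using st by simp
    then have "\<phi> dvd 1"
      using dvd_triv_right[of \<phi> t] by simp
    then show False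
      using degree_sep_pos is_unit_iff_degree[OF sep_nonzero] by simp
  qed
  moreover have "degree s < degree \<phi>"
    using degree_mod_less'[OF sep_nonzero] \<open>s \<noteq> 0\<close> by (simp add: s_def)
  ultimately show thesis
    using st that by blast
qed

lemma mod_sep_nonzero:
  assumes "f \<noteq> 0" "\<mu> f = \<nu> f"
  shows "f mod \<phi> \<noteq> 0"
proof
  assume "f mod \<phi> = 0"
  then obtain q where f: "f = q * \<phi>"
    by (metis div_mult_mod_eq add_0_right)
  then have "q \<noteq> 0"
    using assms(1) by auto
  then show False
    using val_mult_sep_less[of q] assms(2) unfolding f by simp
qed

lemma div_sep_mult_Pgt:
  assumes "f \<noteq> 0" "\<mu> f = \<nu> f"
  shows "f div \<phi> * \<phi> \<in> Pgt \<nu> (\<nu> (f mod \<phi>))"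
proof (rule ccontr)
  define P r where "P = f div \<phi> * \<phi>" and "r = f mod \<phi>"
  have f: "f = P + r"
    by (simp add: P_def r_def)
  assume "f div \<phi> * \<phi> \<notin> Pgt \<nu> (\<nu> (f mod \<phi>))"
  then have "P \<noteq> 0" "\<nu> P \<le> \<nu> r"
    by (auto simp: P_def r_def Pgt_def)
  then have "\<mu> P < \<nu> P"
    using val_mult_sep_less by (auto simp: P_def)
  have "r \<noteq> 0" "\<mu> r = \<nu> r"
    using mod_sep_nonzero[OF assms] degree_mod_less'[OF sep_nonzero] val_eq_if_degree_less
    by (auto simp: r_def)
  have "f \<in> Pge \<nu> (\<nu> P)"
    unfolding f using \<nu>.Pge_add \<open>\<nu> P \<le> \<nu> r\<close> by (simp add: Pge_def)
  then have "f \<in> Pgt \<mu> (\<mu> P)" "r \<in> Pgt \<mu> (\<mu> P)"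
    using assms \<open>\<mu> P < \<nu> P\<close> \<open>\<nu> P \<le> \<nu> r\<close> \<open>\<mu> r = \<nu> r\<close> by (auto simp: Pge_def Pgt_def)
  then have "P \<in> Pgt \<mu> (\<mu> P)"
    using \<mu>.Pgt_diff f by fastforce
  then show False
    using \<open>P \<noteq> 0\<close> by (simp add: Pgt_def)
qed

lemma mu_unit_if_val_eq:
  assumes "f \<noteq> 0" "\<mu> f = \<nu> f"
  shows "mu_unit \<nu> f"
proof -
  define q r where "q = f div \<phi>" and "r = f mod \<phi>"
  have f: "f = q * \<phi> + r"
    by (simp add: q_def r_def)
  have "r \<noteq> 0" "degree r < degree \<phi>"
    using mod_sep_nonzero[OF assms] degree_mod_less'[OF sep_nonzero] by (auto simp: r_def)
  then obtain s t where st: "r * s + t * \<phi> = 1" "s \<noteq> 0" "degree s < degree \<phi>"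
    using ex_inverse_mod_sep by blast
  have "\<mu> (r * s) = \<nu> (r * s)"
    using \<mu>.val_mult \<nu>.val_mult val_eq_if_degree_less st(2,3) \<open>r \<noteq> 0\<close> \<open>degree r < degree \<phi>\<close>
    by simp
  have rs: "r * s - 1 \<in> Pgt \<nu> 0"
  proof (cases "t = 0")
    case True
    then show ?thesis
      using st(1) by (simp add: Pgt_def)
  next
    case False
    then have "0 < \<nu> (t * \<phi>)"
      using val_pos_if_add_eq_1[OF st(1)] val_mult_sep_less[OF False] \<open>\<mu> (r * s) = \<nu> (r * s)\<close>
        \<open>r \<noteq> 0\<close> st(2) sep_nonzero by simp
    moreover have "r * s - 1 = - (t * \<phi>)"
      using st(1) by (simp add: algebra_simps eq_diff_eq)
    ultimately show ?thesis
      by (simp add: Pgt_def)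
  qed
  then have "\<nu> (r * s) = 0"
    by (rule \<nu>.val_eq_0_if_close_to_1)
  then have "q * \<phi> * s \<in> Pgt \<nu> 0"
    using \<nu>.mult_Pgt_Pge[OF div_sep_mult_Pgt[OF assms], of s "\<nu> s"] \<nu>.val_mult \<open>r \<noteq> 0\<close> st(2)
    by (simp add: q_def r_def Pge_def)
  moreover have "s * f - 1 = (r * s - 1) + q * \<phi> * s"
    by (subst f) (simp add: algebra_simps)
  ultimately show ?thesis
    using \<nu>.Pgt_add[OF rs] unfolding mu_unit_def by metis
qed

end

lemma mu_unit_if_val_eq_in_T:
  assumes "in_T v \<mu>" "in_T v \<nu>" "val_less \<mu> \<nu>" "f \<noteq> 0" "\<mu> f = \<nu> f"
  shows "mu_unit \<nu> f"
proof -
  have pair: "poly_valuation_pair \<mu> \<nu>"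
    using assms(1-3) by (simp add: poly_valuation_pair_if_in_T val_less_def)
  obtain \<phi> where "min_separating_poly \<mu> \<nu> \<phi>"
    using poly_valuation_pair.ex_min_separating_poly[OF pair] assms(1-3)
    by (auto simp: val_less_def val_le_def in_T_def not_le)
  then show ?thesis
    using min_separating_poly.mu_unit_if_val_eq assms(4,5) by blast
qed

lemma val_eq_if_mu_unit_in_T:
  assumes "in_T v \<mu>" "in_T v \<nu>" "val_le \<mu> \<nu>" "f \<noteq> 0" "mu_unit \<mu> f"
  shows "\<nu> f = \<mu> f"
  using poly_valuation_pair.val_eq_if_mu_unit poly_valuation_pair_if_in_T assms by blast

theorem lemma1p4:
  fixes v :: "'a::field \<Rightarrow> 'g::linordered_ab_group_add"
    and A :: "'i::linorder set"
    and \<rho> :: "'i \<Rightarrow> 'a poly \<Rightarrow> 'g"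
    and f :: "'a poly"
  assumes "valued_field v"
    and "contains_divisible_hull (value_group v)"
    and "\<forall>i\<in>A. in_T v (\<rho> i) \<and> inner_node (\<rho> i)"
    and "\<forall>i\<in>A. \<forall>j\<in>A. i < j \<longrightarrow> val_less (\<rho> i) (\<rho> j)"
    and "\<forall>i\<in>A. \<exists>j\<in>A. i < j"
    and "f \<noteq> 0"
  shows "C_stable A \<rho> f \<longleftrightarrow> (\<exists>i\<in>A. ini (\<rho> i) f \<in> Units (Gr (\<rho> i)))"
proof
  assume "C_stable A \<rho> f"
  then obtain i j where "i \<in> A" "j \<in> A" "i < j" "\<rho> i f = \<rho> j f"
    using assms(5) unfolding C_stable_def by fastforce
  then have "mu_unit (\<rho> j) f"
    using mu_unit_if_val_eq_in_T assms(3,4,6) by blast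
  then show "\<exists>i\<in>A. ini (\<rho> i) f \<in> Units (Gr (\<rho> i))"
    using poly_valuation.ini_Units_iff_mu_unit poly_valuation_if_in_T assms(3,6) \<open>j \<in> A\<close> by blast
next
  assume "\<exists>i\<in>A. ini (\<rho> i) f \<in> Units (Gr (\<rho> i))"
  then obtain i where i: "i \<in> A" "mu_unit (\<rho> i) f"
    using poly_valuation.ini_Units_iff_mu_unit poly_valuation_if_in_T assms(3,6) by blast
  then have "\<rho> j f = \<rho> i f" if "j \<in> A" "i < j" for j
    using val_eq_if_mu_unit_in_T assms(3,4,6) that by (meson val_less_def)
  then show "C_stable A \<rho> f"
    unfolding C_stable_def using i(1) by blast
qed

end
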